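(* Consider the MT-model on $\mathbb{T}_d$, $d\ge2$, and let $X$ be the number of successors of a given non-root vertex $v$ that are ever informed, conditionally on $v$ being informed (the number of spreaders generated by a spreader other than the root). Then $$\mathbb{P}(X=i)=\binom{d}{i}\frac{(i+1)!}{(d+1)^{i+1}},\qquad i\in\{0,\dots,d\}.$$ Moreover, $\mathbb{E}(X)>1$ if and only if $d\ge3$ (and $\mathbb{E}(X)=8/9$ when $d=2$).
   Context: Let $d\ge 2$ and let $\mathbb{T}_d$ be the infinite tree in which every vertex has degree $d+1$, with root $\mathbf 0$; the successors of a vertex $u$ are its neighbours farther from $\mathbf 0$ (each non-root vertex has $d$ successors and one parent). The MT-model on $\mathbb{T}_d$ is the continuous-time Markov process $(\eta_t)_{t\ge0}$ on $\{-1,0,1\}^{\mathbb{T}_d}$ ($-1$ = ignorant, $0$ = spreader, $1$ = stifler) in which a vertex in state $-1$ jumps to $0$ at rate equal to its number of neighbours in state $0$, and a vertex in state $0$ jumps to $1$ at rate equal to its number of neighbours in states $\{0,1\}$ (equivalently, each spreader contacts each neighbour at rate 1, informing ignorants and becoming a stifler upon contacting a non-ignorant). Initially $\eta_0(\mathbf 0)=0$ and all other vertices are in state $-1$. *)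

theory Defs
  imports "HOL-Probability.Probability"
begin

text \<open>Vertices of the tree T_d are encoded as lists of naturals: the root is the
empty list, and the child of u in direction k is k # u (so the parent of a
non-root vertex w is tl w).  The root has d+1 children [0],...,[d]; every
non-root vertex u has d children 0#u,...,(d-1)#u.  Hence every vertex has
degree d+1.\<close>

type_synonym vertex = "nat list"

definition tvertex :: "nat \<Rightarrow> vertex \<Rightarrow> bool" where
  "tvertex d u \<longleftrightarrow> u = [] \<or> (last u \<le> d \<and> (\<forall>x\<in>set (butlast u). x < d))"

definition children :: "nat \<Rightarrow> vertex \<Rightarrow> vertex set" where
  "children d u = (if u = [] then {[k] | k. k \<le> d} else {k # u | k. k < d})"

definition nbrs :: "nat \<Rightarrow> vertex \<Rightarrow> vertex set" where
  "nbrs d u = children d u \<union> (if u = [] then {} else {tl u})"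

text \<open>Configurations: -1 ignorant, 0 spreader, 1 stifler.\<close>
type_synonym config = "vertex \<Rightarrow> int"

definition mt_init :: config where
  "mt_init = (\<lambda>u. if u = [] then 0 else -1)"

definition contact :: "config \<Rightarrow> vertex \<times> vertex \<Rightarrow> config" where
  "contact \<eta> p = (if \<eta> (snd p) = -1 then \<eta>(snd p := 0) else \<eta>(fst p := 1))"

text \<open>Embedded jump chain of the MT-model: every (spreader, neighbour) pair
carries rate 1 and every such contact changes the configuration, so the next
transition is a uniformly chosen such pair.\<close>
definition mt_step :: "nat \<Rightarrow> config \<Rightarrow> config pmf" where
  "mt_step d \<eta> =
     (let P = {(s, w). tvertex d s \<and> \<eta> s = 0 \<and> w \<in> nbrs d s}
      in if P = {} then return_pmf \<eta> else map_pmf (contact \<eta>) (pmf_of_set P))"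

definition mt_state :: "nat \<Rightarrow> nat \<Rightarrow> config pmf" where
  "mt_state d n = ((\<lambda>p. bind_pmf p (mt_step d)) ^^ n) (return_pmf mt_init)"

text \<open>q d v j = P(v is ever informed and at least j successors of v are ever
informed).  This event is the increasing union over n of the corresponding
events at jump n, so its probability is the supremum.\<close>
definition mt_q :: "nat \<Rightarrow> vertex \<Rightarrow> nat \<Rightarrow> real" where
  "mt_q d v j = (SUP n. measure_pmf.prob (mt_state d n)
      {\<eta>. \<eta> v \<noteq> -1 \<and> j \<le> card {c \<in> children d v. \<eta> c \<noteq> -1}})"

text \<open>P(X = i | v informed), X = number of successors of v ever informed.\<close>
definition mt_X_dist :: "nat \<Rightarrow> vertex \<Rightarrow> nat \<Rightarrow> real" where
  "mt_X_dist d v i = (mt_q d v i - mt_q d v (Suc i)) / mt_q d v 0"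

definition mt_X_mean :: "nat \<Rightarrow> vertex \<Rightarrow> real" where
  "mt_X_mean d v = (\<Sum>i\<in>{0..d}. real i * mt_X_dist d v i)"

end

theory Submission
  imports Defs
begin

text \<open>While the non-root vertex \<open>v\<close> is a spreader with \<open>k\<close> informed successors, each jump of the
  chain made by \<open>v\<close> informs a new successor with probability \<open>(d - k)/(d + 1)\<close> and otherwise
  silences \<open>v\<close>, whereas jumps made by other spreaders change neither \<open>v\<close> nor its successors.
  Hence the conditional probability that \<open>v\<close> ends up with at least \<open>j\<close> informed successors,
  minus its initial value \<open>h\<^sub>j = \<Prod>i<j. (d - i)/(d + 1)\<close> times the indicator that \<open>v\<close> is
  informed, is a martingale started at 0. This pins down
  \<open>P(v informed, at least j successors informed)\<close> up to \<open>P(v is a spreader)\<close>, which tends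
  to 0: at jump \<open>n\<close> there are at most \<open>(d + 1)(n + 1)\<close> spreader-neighbour pairs, so a spreading
  \<open>v\<close> stops with probability at least \<open>1/((d + 1)(n + 1))\<close>, and the harmonic series diverges.
  Thus \<open>P(X \<ge> j | v informed) = h\<^sub>j = (d choose j) j!/(d + 1)\<^sup>j\<close>, which gives the law of \<open>X\<close>
  and \<open>E X = h\<^sub>1 + \<dots> + h\<^sub>d\<close>.\<close>

lemma expectation_bind_pmf_finite:
  fixes f :: "'b \<Rightarrow> real"
  assumes "finite (set_pmf M)" and "\<And>x. x \<in> set_pmf M \<Longrightarrow> finite (set_pmf (N x))"
  shows "measure_pmf.expectation (bind_pmf M N) f
       = measure_pmf.expectation M (\<lambda>x. measure_pmf.expectation (N x) f)"
proof -
  have "measure_pmf.expectation (bind_pmf M N) f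
      = (\<Sum>x\<in>set_pmf M. pmf M x * measure_pmf.expectation (N x) f)"
    using pmf_expectation_bind[of "set_pmf M" N M f] assms by simp
  also have "\<dots> = measure_pmf.expectation M (\<lambda>x. measure_pmf.expectation (N x) f)"
    by (subst integral_measure_pmf[OF assms(1)]) auto
  finally show ?thesis .
qed

lemma limit_eq_0_if_summable_div_Suc:
  fixes r :: "nat \<Rightarrow> real"
  assumes lim: "r \<longlonglongrightarrow> L" and nonneg: "\<And>n. 0 \<le> r n"
    and summable: "summable (\<lambda>n. r n / real (Suc n))"
  shows "L = 0"
proof (rule ccontr)
  assume "L \<noteq> 0"
  moreover have "0 \<le> L"
    using LIMSEQ_le_const[OF lim] nonneg by blast
  ultimately have L: "0 < L"
    by simp
  have "eventually (\<lambda>n. L / 2 < r n) sequentially"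
    using order_tendstoD(1)[OF lim, of "L / 2"] L by simp
  then have "eventually (\<lambda>n. norm (inverse (real (Suc n))) \<le> 2 / L * (r n / real (Suc n))) sequentially"
  proof eventually_elim
    case (elim n)
    then have "1 \<le> 2 / L * r n"
      using L by (simp add: field_simps)
    then show ?case
      using divide_right_mono[of 1 "2 / L * r n" "real (Suc n)"] by (simp add: inverse_eq_divide)
  qed
  then have "summable (\<lambda>n. inverse (real (Suc n)))"
    by (rule summable_comparison_test_ev) (rule summable_mult[OF summable])
  then show False
    using summable_Suc_iff[of "\<lambda>n. inverse (real n)"] not_summable_harmonic[where 'a = real] by simp
qed

lemma prob_Collect_eq_expectation:
  "measure_pmf.prob M {x. P x} = measure_pmf.expectation M (\<lambda>x. of_bool (P x) :: real)"
proof -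
  have "(\<lambda>x. of_bool (P x) :: real) = indicator {x. P x}"
    by (auto simp: indicator_def)
  then show ?thesis
    by simp
qed

lemma finite_children: "finite (children d u)"
  by (auto simp: children_def)

lemma children_nonroot: "u \<noteq> [] \<Longrightarrow> children d u = (\<lambda>k. k # u) ` {..<d}"
  by (auto simp: children_def)

lemma card_children_nonroot: "u \<noteq> [] \<Longrightarrow> card (children d u) = d"
  by (simp add: children_nonroot card_image inj_on_def)

lemma card_children_le: "card (children d u) \<le> Suc d"
proof (cases "u = []")
  case True
  then have "children d u = (\<lambda>k. [k]) ` {..d}" by (auto simp: children_def)
  then show ?thesis by (metis card_atMost card_image_le finite_atMost)
qed (simp add: card_children_nonroot)

lemma parent_of_child: "c \<in> children d u \<Longrightarrow> c \<noteq> [] \<and> tl c = u"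
  by (auto simp: children_def split: if_splits)

lemma not_in_children: "u \<notin> children d u"
  by (auto simp: children_def dest: arg_cong[of _ _ length])

lemma parent_notin_children: "u \<noteq> [] \<Longrightarrow> tl u \<notin> children d u"
  by (auto simp: children_def dest: arg_cong[of _ _ length])

lemma nbrs_nonroot: "u \<noteq> [] \<Longrightarrow> nbrs d u = insert (tl u) (children d u)"
  by (auto simp: nbrs_def)

lemma nbrs_cases: "w \<in> nbrs d u \<Longrightarrow> (w \<noteq> [] \<and> tl w = u) \<or> (u \<noteq> [] \<and> w = tl u)"
  by (auto simp: nbrs_def dest: parent_of_child split: if_splits)

lemma finite_nbrs: "finite (nbrs d u)"
  by (simp add: nbrs_def finite_children)

lemma card_nbrs_nonroot: "u \<noteq> [] \<Longrightarrow> card (nbrs d u) = Suc d"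
  by (simp add: nbrs_nonroot finite_children parent_notin_children card_children_nonroot)

lemma card_nbrs_le: "card (nbrs d u) \<le> Suc d"
  using card_children_le[of d u] card_nbrs_nonroot[of u d] by (cases "u = []") (auto simp: nbrs_def)

lemma tvertex_drop: "tvertex d v \<Longrightarrow> tvertex d (drop i v)"
  by (cases "i < length v")
     (auto simp: tvertex_def butlast_drop dest: in_set_dropD)

lemma drop_in_children:
  assumes "tvertex d v" and "i < length v"
  shows "drop i v \<in> children d (drop (Suc i) v)"
proof (cases "Suc i = length v")
  case True
  then have "v ! i = last v"
    by (metis diff_Suc_1 last_conv_nth list.size(3) nat.distinct(1))
  then have "drop i v = [last v]"
    using Cons_nth_drop_Suc[OF assms(2)] True by simp
  then show ?thesis
    using assms True by (auto simp: tvertex_def children_def)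
next
  case False
  then have "i < length (butlast v)"
    using assms(2) by simp
  then have "v ! i \<in> set (butlast v)"
    by (metis nth_butlast nth_mem)
  moreover have "drop i v = v ! i # drop (Suc i) v"
    using Cons_nth_drop_Suc[OF assms(2)] by simp
  ultimately show ?thesis
    using assms False by (auto simp: tvertex_def children_def)
qed

definition spreader_pairs :: "nat \<Rightarrow> config \<Rightarrow> (vertex \<times> vertex) set" where
  "spreader_pairs d \<eta> = {(s, w). tvertex d s \<and> \<eta> s = 0 \<and> w \<in> nbrs d s}"

lemma mt_step_eq:
  "mt_step d \<eta> = (if spreader_pairs d \<eta> = {} then return_pmf \<eta>
     else map_pmf (contact \<eta>) (pmf_of_set (spreader_pairs d \<eta>)))"
  unfolding mt_step_def spreader_pairs_def Let_def ..

lemma mt_state_0: "mt_state d 0 = return_pmf mt_init"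
  by (simp add: mt_state_def)

lemma mt_state_Suc: "mt_state d (Suc n) = bind_pmf (mt_state d n) (mt_step d)"
  by (simp add: mt_state_def)

lemma contact_informed: "\<eta> u \<noteq> -1 \<Longrightarrow> contact \<eta> p u \<noteq> -1"
  by (auto simp: contact_def)

lemma contact_stifler: "\<eta> u = 1 \<Longrightarrow> contact \<eta> p u = 1"
  by (auto simp: contact_def)

lemma set_mt_step_subset: "set_pmf (mt_step d \<eta>) \<subseteq> insert \<eta> (range (contact \<eta>))"
  by (auto simp: mt_step_eq)

definition admissible :: "nat \<Rightarrow> config \<Rightarrow> bool" where
  "admissible n \<eta> \<longleftrightarrow> (\<forall>u. \<eta> u \<in> {-1, 0, 1})
     \<and> finite {u. \<eta> u \<noteq> -1} \<and> card {u. \<eta> u \<noteq> -1} \<le> Suc n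
     \<and> (\<forall>u. u \<noteq> [] \<longrightarrow> \<eta> u \<noteq> -1 \<longrightarrow> \<eta> (tl u) \<noteq> -1)"

lemma admissible_Suc: "admissible n \<eta> \<Longrightarrow> admissible (Suc n) \<eta>"
  by (auto simp: admissible_def)

lemma spreader_pairs_subset: "spreader_pairs d \<eta> \<subseteq> Sigma {u. \<eta> u \<noteq> -1} (nbrs d)"
  by (auto simp: spreader_pairs_def)

lemma finite_spreader_pairs: "admissible n \<eta> \<Longrightarrow> finite (spreader_pairs d \<eta>)"
  by (rule finite_subset[OF spreader_pairs_subset]) (auto simp: admissible_def finite_nbrs)

lemma card_spreader_pairs_le:
  assumes "admissible n \<eta>"
  shows "card (spreader_pairs d \<eta>) \<le> Suc d * Suc n"
proof -
  let ?I = "{u. \<eta> u \<noteq> -1}"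
  have fin: "finite ?I" and card: "card ?I \<le> Suc n"
    using assms by (auto simp: admissible_def)
  have "card (spreader_pairs d \<eta>) \<le> card (Sigma ?I (nbrs d))"
    by (rule card_mono[OF _ spreader_pairs_subset]) (simp add: fin finite_nbrs)
  also have "\<dots> = (\<Sum>u\<in>?I. card (nbrs d u))"
    using fin finite_nbrs by simp
  also have "\<dots> \<le> card ?I * Suc d"
    using sum_mono[of ?I "\<lambda>u. card (nbrs d u)" "\<lambda>_. Suc d"] card_nbrs_le by simp
  also have "\<dots> \<le> Suc n * Suc d"
    using card by (rule mult_le_mono1)
  finally show ?thesis
    by (simp only: mult.commute)
qed

lemma set_mt_step:
  "admissible n \<eta> \<Longrightarrow> set_pmf (mt_step d \<eta>)
     = (if spreader_pairs d \<eta> = {} then {\<eta>} else contact \<eta> ` spreader_pairs d \<eta>)"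
  by (simp add: mt_step_eq finite_spreader_pairs)

lemma admissible_contact:
  assumes adm: "admissible n \<eta>" and p: "(s, w) \<in> spreader_pairs d \<eta>"
  shows "admissible (Suc n) (contact \<eta> (s, w))"
proof -
  have s: "\<eta> s = 0" and w: "w \<in> nbrs d s"
    using p by (auto simp: spreader_pairs_def)
  show ?thesis
  proof (cases "\<eta> w = -1")
    case True
    have "w \<noteq> [] \<Longrightarrow> \<eta> (tl w) \<noteq> -1"
      using adm s nbrs_cases[OF w] True unfolding admissible_def by force
    moreover have "{u. (\<eta>(w := 0)) u \<noteq> -1} = insert w {u. \<eta> u \<noteq> -1}"
      by auto
    ultimately show ?thesis
      using adm True unfolding admissible_def contact_def by (simp add: card_insert_if)
  next
    case False
    have "{u. (\<eta>(s := 1)) u \<noteq> -1} = {u. \<eta> u \<noteq> -1}"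
      using s by auto
    then show ?thesis
      using adm False s unfolding admissible_def contact_def by simp
  qed
qed

lemma admissible_mt_state: "\<eta> \<in> set_pmf (mt_state d n) \<Longrightarrow> admissible n \<eta>"
proof (induction n arbitrary: \<eta>)
  case 0
  have "{u. mt_init u \<noteq> -1} = {[]}"
    by (auto simp: mt_init_def)
  then show ?case
    using 0 by (auto simp: mt_state_0 admissible_def mt_init_def)
next
  case (Suc n)
  then obtain \<zeta> where \<zeta>: "\<zeta> \<in> set_pmf (mt_state d n)" and step: "\<eta> \<in> set_pmf (mt_step d \<zeta>)"
    by (auto simp: mt_state_Suc)
  have adm: "admissible n \<zeta>"
    using Suc.IH \<zeta> by blast
  show ?case
  proof (cases "spreader_pairs d \<zeta> = {}")
    case True
    then show ?thesis
      using step set_mt_step[OF adm] admissible_Suc[OF adm] by simp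
  next
    case False
    then show ?thesis
      using step set_mt_step[OF adm] admissible_contact[OF adm] by auto
  qed
qed

lemma finite_set_pmf_mt_step: "admissible n \<eta> \<Longrightarrow> finite (set_pmf (mt_step d \<eta>))"
  by (simp add: set_mt_step finite_spreader_pairs)

lemma finite_set_pmf_mt_state: "finite (set_pmf (mt_state d n))"
proof (induction n)
  case (Suc n)
  then show ?case
    by (auto simp: mt_state_Suc intro: finite_set_pmf_mt_step admissible_mt_state)
qed (simp add: mt_state_0)

abbreviation mt_expectation :: "nat \<Rightarrow> nat \<Rightarrow> (config \<Rightarrow> real) \<Rightarrow> real" where
  "mt_expectation d n F \<equiv> measure_pmf.expectation (mt_state d n) F"

abbreviation mt_prob :: "nat \<Rightarrow> nat \<Rightarrow> config set \<Rightarrow> real" where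
  "mt_prob d n A \<equiv> measure_pmf.prob (mt_state d n) A"

lemma integrable_mt_state [simp]: "integrable (measure_pmf (mt_state d n)) (F :: config \<Rightarrow> real)"
  by (rule integrable_measure_pmf_finite[OF finite_set_pmf_mt_state])

lemma mt_expectation_Suc:
  "mt_expectation d (Suc n) F = mt_expectation d n (\<lambda>\<eta>. measure_pmf.expectation (mt_step d \<eta>) F)"
  unfolding mt_state_Suc
  by (rule expectation_bind_pmf_finite)
     (auto intro: finite_set_pmf_mt_state finite_set_pmf_mt_step admissible_mt_state)

lemma mt_expectation_mono:
  "(\<And>\<eta>. admissible n \<eta> \<Longrightarrow> F \<eta> \<le> G \<eta>) \<Longrightarrow> mt_expectation d n F \<le> mt_expectation d n G"
  by (rule integral_mono_AE) (auto intro!: AE_pmfI admissible_mt_state)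

lemma mt_expectation_cong:
  "(\<And>\<eta>. admissible n \<eta> \<Longrightarrow> F \<eta> = G \<eta>) \<Longrightarrow> mt_expectation d n F = mt_expectation d n G"
  by (rule integral_cong_AE) (auto intro!: AE_pmfI admissible_mt_state)

lemma prob_mt_step_closed:
  assumes "\<And>p. contact \<eta> p \<in> A" and "\<eta> \<in> A"
  shows "measure_pmf.prob (mt_step d \<eta>) A = 1"
proof -
  have "set_pmf (mt_step d \<eta>) \<subseteq> A"
    using set_mt_step_subset assms by blast
  then show ?thesis
    by (subst measure_pmf.prob_eq_1) (auto simp: AE_measure_pmf_iff)
qed

lemma mt_prob_mono_closed:
  assumes "\<And>\<eta> p. \<eta> \<in> A \<Longrightarrow> contact \<eta> p \<in> A"
  shows "mt_prob d n A \<le> mt_prob d (Suc n) A"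
proof -
  have "indicator A \<eta> \<le> measure_pmf.prob (mt_step d \<eta>) A" for \<eta>
    using prob_mt_step_closed[of \<eta> A d] assms by (cases "\<eta> \<in> A") simp_all
  then have "mt_prob d n A \<le> mt_expectation d n (\<lambda>\<eta>. measure_pmf.prob (mt_step d \<eta>) A)"
    using mt_expectation_mono[of n "indicator A"] by simp
  also have "\<dots> = mt_expectation d (Suc n) (indicator A)"
    by (subst mt_expectation_Suc) simp
  finally show ?thesis
    by simp
qed

definition informed_children :: "nat \<Rightarrow> vertex \<Rightarrow> config \<Rightarrow> nat" where
  "informed_children d v \<eta> = card {c \<in> children d v. \<eta> c \<noteq> -1}"

text \<open>The probability that a spreader with \<open>k\<close> informed successors ends up with at least \<open>j\<close>
  of them; \<open>h\<^sub>j = spread_prob d j 0\<close>.\<close>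

definition spread_prob :: "nat \<Rightarrow> nat \<Rightarrow> nat \<Rightarrow> real" where
  "spread_prob d j k = (\<Prod>i\<in>{k..<j}. real (d - i) / real (Suc d))"

text \<open>The conditional probability, given the configuration, that an informed \<open>v\<close> ends up with at
  least \<open>j\<close> informed successors.\<close>

definition potential :: "nat \<Rightarrow> vertex \<Rightarrow> nat \<Rightarrow> config \<Rightarrow> real" where
  "potential d v j \<eta> =
     (if \<eta> v = 0 then spread_prob d j (informed_children d v \<eta>)
      else if \<eta> v = 1 then of_bool (j \<le> informed_children d v \<eta>) else 0)"

definition compensated_potential :: "nat \<Rightarrow> vertex \<Rightarrow> nat \<Rightarrow> config \<Rightarrow> real" where
  "compensated_potential d v j \<eta> = potential d v j \<eta> - spread_prob d j 0 * of_bool (\<eta> v \<noteq> -1)"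

lemma spread_prob_ge: "j \<le> k \<Longrightarrow> spread_prob d j k = 1"
  by (simp add: spread_prob_def)

lemma spread_prob_less: "k < j \<Longrightarrow> spread_prob d j k = real (d - k) / real (Suc d) * spread_prob d j (Suc k)"
  by (simp add: spread_prob_def prod.atLeast_Suc_lessThan)

lemma spread_prob_nonneg: "0 \<le> spread_prob d j k"
  by (simp add: spread_prob_def prod_nonneg)

lemma spread_prob_le_1: "spread_prob d j k \<le> 1"
  unfolding spread_prob_def by (rule prod_le_1) auto

lemma spread_prob_step:
  assumes "k \<le> d"
  shows "real (Suc d) * spread_prob d j k
       = real (d - k) * spread_prob d j (Suc k) + real (Suc k) * of_bool (j \<le> k)"
proof (cases "j \<le> k")
  case True
  then show ?thesis
    using assms by (simp add: spread_prob_ge)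
qed (simp add: spread_prob_less)

lemma informed_children_upd_other:
  "c \<notin> children d v \<Longrightarrow> informed_children d v (\<eta>(c := x)) = informed_children d v \<eta>"
  unfolding informed_children_def by (rule arg_cong[where f = card]) auto

lemma informed_children_upd_informed:
  "\<eta> c \<noteq> -1 \<Longrightarrow> x \<noteq> -1 \<Longrightarrow> informed_children d v (\<eta>(c := x)) = informed_children d v \<eta>"
  unfolding informed_children_def by (rule arg_cong[where f = card]) auto

lemma informed_children_ignorant:
  assumes "admissible n \<eta>" and "\<eta> v = -1"
  shows "informed_children d v \<eta> = 0"
proof -
  have "{c \<in> children d v. \<eta> c \<noteq> -1} = {}"
    using assms parent_of_child unfolding admissible_def by blast
  then show ?thesis
    unfolding informed_children_def by (simp only: card.empty)
qed

lemma compensated_potential_contact_other: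
  assumes adm: "admissible n \<eta>" and p: "(s, w) \<in> spreader_pairs d \<eta>" and "s \<noteq> v"
  shows "compensated_potential d v j (contact \<eta> (s, w)) = compensated_potential d v j \<eta>"
proof -
  have s: "\<eta> s = 0" and w: "w \<in> nbrs d s"
    using p by (auto simp: spreader_pairs_def)
  consider "\<eta> w = -1" "w = v" | "\<eta> w = -1" "w \<noteq> v" | "\<eta> w \<noteq> -1"
    by blast
  then show ?thesis
  proof cases
    case 1
    then have "informed_children d v (\<eta>(v := 0)) = 0"
      using informed_children_ignorant[OF adm] informed_children_upd_other[OF not_in_children] by simp
    then show ?thesis
      using 1 by (simp add: contact_def compensated_potential_def potential_def spread_prob_def)
  next
    case 2
    text \<open>An ignorant successor \<open>w\<close> of \<open>v\<close> has no informed neighbour but \<open>v\<close>.\<close>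
    have "w \<notin> children d v"
    proof
      assume "w \<in> children d v"
      then have "tl w = v"
        using parent_of_child by blast
      then show False
        using adm s 2 nbrs_cases[OF w] \<open>s \<noteq> v\<close> unfolding admissible_def by force
    qed
    then show ?thesis
      using 2 by (simp add: contact_def compensated_potential_def potential_def informed_children_upd_other)
  next
    case 3
    then show ?thesis
      using s \<open>s \<noteq> v\<close>
      by (simp add: contact_def compensated_potential_def potential_def informed_children_upd_informed)
  qed
qed

lemma potential_contact_ignorant_child:
  assumes "\<eta> v = 0" and "c \<in> children d v" and "\<eta> c = -1"
  shows "potential d v j (contact \<eta> (v, c)) = spread_prob d j (Suc (informed_children d v \<eta>))"
proof -
  have "{x \<in> children d v. (\<eta>(c := 0)) x \<noteq> -1} = insert c {x \<in> children d v. \<eta> x \<noteq> -1}"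
    using assms by auto
  then have "informed_children d v (\<eta>(c := 0)) = Suc (informed_children d v \<eta>)"
    using assms finite_children by (simp add: informed_children_def)
  moreover have "c \<noteq> v"
    using assms by auto
  ultimately show ?thesis
    using assms by (simp add: contact_def potential_def)
qed

lemma potential_contact_informed:
  assumes "\<eta> v = 0" and "\<eta> w \<noteq> -1"
  shows "potential d v j (contact \<eta> (v, w)) = of_bool (j \<le> informed_children d v \<eta>)"
  using assms by (simp add: contact_def potential_def informed_children_upd_other[OF not_in_children])

lemma sum_potential_contact_spreader:
  assumes adm: "admissible n \<eta>" and v: "\<eta> v = 0" "v \<noteq> []"
  shows "(\<Sum>w\<in>nbrs d v. potential d v j (contact \<eta> (v, w))) = real (Suc d) * potential d v j \<eta>"
proof -
  define k where "k = informed_children d v \<eta>"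
  define C0 where "C0 = {c \<in> children d v. \<eta> c = -1}"
  define C1 where "C1 = insert (tl v) {c \<in> children d v. \<eta> c \<noteq> -1}"
  have parent: "\<eta> (tl v) \<noteq> -1"
    using adm v unfolding admissible_def by auto
  have fin: "finite C0" "finite C1"
    using finite_children by (auto simp: C0_def C1_def)
  have nbrs: "nbrs d v = C0 \<union> C1" and disj: "C0 \<inter> C1 = {}"
    using parent by (auto simp: nbrs_nonroot[OF v(2)] C0_def C1_def)
  have card_C1: "card C1 = Suc k"
    using parent_notin_children[OF v(2)] finite_children by (simp add: C1_def k_def informed_children_def)
  then have card_C0: "card C0 = d - k" and "k \<le> d"
    using card_Un_disjoint[OF fin disj] card_nbrs_nonroot[OF v(2), of d] by (simp_all add: nbrs)
  have "(\<Sum>w\<in>nbrs d v. potential d v j (contact \<eta> (v, w)))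
      = (\<Sum>w\<in>C0. potential d v j (contact \<eta> (v, w))) + (\<Sum>w\<in>C1. potential d v j (contact \<eta> (v, w)))"
    unfolding nbrs using fin disj by (rule sum.union_disjoint)
  also have "\<dots> = (\<Sum>w\<in>C0. spread_prob d j (Suc k)) + (\<Sum>w\<in>C1. of_bool (j \<le> k))"
    using potential_contact_ignorant_child[of \<eta> v] potential_contact_informed[of \<eta> v] v parent
    by (intro arg_cong2[where f = "(+)"] sum.cong) (auto simp: C0_def C1_def k_def)
  also have "\<dots> = real (d - k) * spread_prob d j (Suc k) + real (Suc k) * of_bool (j \<le> k)"
    using card_C0 card_C1 by simp
  also have "\<dots> = real (Suc d) * potential d v j \<eta>"
    using spread_prob_step[OF \<open>k \<le> d\<close>] v by (simp add: potential_def k_def)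
  finally show ?thesis .
qed

lemma sum_compensated_potential_contact_spreader:
  assumes adm: "admissible n \<eta>" and v: "\<eta> v = 0" "v \<noteq> []"
  shows "(\<Sum>w\<in>nbrs d v. compensated_potential d v j (contact \<eta> (v, w)))
       = real (Suc d) * compensated_potential d v j \<eta>"
proof -
  have "(\<Sum>w\<in>nbrs d v. compensated_potential d v j (contact \<eta> (v, w)))
      = (\<Sum>w\<in>nbrs d v. potential d v j (contact \<eta> (v, w))) - real (Suc d) * spread_prob d j 0"
    using contact_informed[of \<eta> v] v card_nbrs_nonroot[OF v(2)]
    by (simp add: compensated_potential_def sum_subtractf)
  also have "\<dots> = real (Suc d) * compensated_potential d v j \<eta>"
    using sum_potential_contact_spreader[OF assms] v by (simp add: compensated_potential_def algebra_simps)
  finally show ?thesis .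
qed

lemma expectation_mt_step_compensated_potential:
  assumes adm: "admissible n \<eta>" and v: "tvertex d v" "v \<noteq> []"
  shows "measure_pmf.expectation (mt_step d \<eta>) (compensated_potential d v j)
       = compensated_potential d v j \<eta>"
proof (cases "spreader_pairs d \<eta> = {}")
  case False
  let ?P = "spreader_pairs d \<eta>" and ?f = "compensated_potential d v j" and ?V = "Pair v ` nbrs d v"
  have fin: "finite ?P"
    by (rule finite_spreader_pairs[OF adm])
  have "fst p \<noteq> v" if "p \<in> ?P - ?V" for p
    using that by (auto simp: spreader_pairs_def)
  then have other: "(\<Sum>p\<in>?P - ?V. ?f (contact \<eta> p)) = (\<Sum>p\<in>?P - ?V. ?f \<eta>)"
    using compensated_potential_contact_other[OF adm] by (intro sum.cong) force+
  have own: "(\<Sum>p\<in>?P \<inter> ?V. ?f (contact \<eta> p)) = (\<Sum>p\<in>?P \<inter> ?V. ?f \<eta>)"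
  proof (cases "\<eta> v = 0")
    case True
    then have P_v: "?P \<inter> ?V = ?V"
      using v by (auto simp: spreader_pairs_def)
    have "(\<Sum>w\<in>nbrs d v. ?f (contact \<eta> (v, w))) = (\<Sum>w\<in>nbrs d v. ?f \<eta>)"
      using sum_compensated_potential_contact_spreader[OF adm True v(2)] card_nbrs_nonroot[OF v(2)] by simp
    then show ?thesis
      unfolding P_v by (simp add: sum.reindex card_image inj_on_def)
  next
    case False
    then have "?P \<inter> ?V = {}"
      by (auto simp: spreader_pairs_def)
    then show ?thesis
      by simp
  qed
  have "(\<Sum>p\<in>?P. ?f (contact \<eta> p)) = (\<Sum>p\<in>?P. ?f \<eta>)"
    using sum.Int_Diff[OF fin, of _ ?V] other own by metis
  then show ?thesis
    using False fin by (simp add: mt_step_eq integral_pmf_of_set)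
qed (simp add: mt_step_eq)

lemma mt_expectation_compensated_potential:
  assumes "tvertex d v" and "v \<noteq> []"
  shows "mt_expectation d n (compensated_potential d v j) = 0"
proof (induction n)
  case 0
  show ?case
    using assms by (simp add: mt_state_0 mt_init_def compensated_potential_def potential_def)
next
  case (Suc n)
  have "mt_expectation d (Suc n) (compensated_potential d v j)
      = mt_expectation d n (compensated_potential d v j)"
    by (subst mt_expectation_Suc)
       (intro mt_expectation_cong expectation_mt_step_compensated_potential assms)
  with Suc.IH show ?case
    by simp
qed

lemma mt_expectation_potential:
  assumes "tvertex d v" and "v \<noteq> []"
  shows "mt_expectation d n (potential d v j) = spread_prob d j 0 * mt_prob d n {\<eta>. \<eta> v \<noteq> -1}"
  using mt_expectation_compensated_potential[OF assms, of n j]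
  by (simp add: compensated_potential_def[abs_def] prob_Collect_eq_expectation)

lemma mt_prob_informed_eq:
  "mt_prob d n {\<eta>. \<eta> v \<noteq> -1} = mt_prob d n {\<eta>. \<eta> v = 0} + mt_prob d n {\<eta>. \<eta> v = 1}"
proof -
  have "mt_expectation d n (\<lambda>\<eta>. of_bool (\<eta> v \<noteq> -1))
      = mt_expectation d n (\<lambda>\<eta>. of_bool (\<eta> v = 0) + of_bool (\<eta> v = 1))"
    by (rule mt_expectation_cong) (auto simp: admissible_def)
  then show ?thesis
    by (simp add: prob_Collect_eq_expectation)
qed

lemma mt_prob_successors_le:
  assumes "tvertex d v" and "v \<noteq> []"
  shows "mt_prob d n {\<eta>. \<eta> v \<noteq> -1 \<and> j \<le> informed_children d v \<eta>}
       \<le> spread_prob d j 0 * mt_prob d n {\<eta>. \<eta> v \<noteq> -1}"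
proof -
  have "mt_expectation d n (\<lambda>\<eta>. of_bool (\<eta> v \<noteq> -1 \<and> j \<le> informed_children d v \<eta>))
      \<le> mt_expectation d n (potential d v j)"
    by (rule mt_expectation_mono)
       (auto simp: admissible_def potential_def spread_prob_ge spread_prob_nonneg)
  then show ?thesis
    using mt_expectation_potential[OF assms] by (simp add: prob_Collect_eq_expectation)
qed

lemma mt_prob_successors_ge:
  assumes "tvertex d v" and "v \<noteq> []"
  shows "spread_prob d j 0 * mt_prob d n {\<eta>. \<eta> v \<noteq> -1}
       \<le> mt_prob d n {\<eta>. \<eta> v \<noteq> -1 \<and> j \<le> informed_children d v \<eta>} + mt_prob d n {\<eta>. \<eta> v = 0}"
proof -
  have "mt_expectation d n (potential d v j)
      \<le> mt_expectation d n (\<lambda>\<eta>. of_bool (\<eta> v \<noteq> -1 \<and> j \<le> informed_children d v \<eta>) + of_bool (\<eta> v = 0))"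
    by (rule mt_expectation_mono)
       (auto simp: admissible_def potential_def spread_prob_le_1 order.trans[OF spread_prob_le_1])
  then show ?thesis
    using mt_expectation_potential[OF assms] by (simp add: prob_Collect_eq_expectation)
qed

lemma prob_mt_step_stifler_ge:
  assumes adm: "admissible n \<eta>" and v: "tvertex d v" "v \<noteq> []"
  shows "of_bool (\<eta> v = 1) + of_bool (\<eta> v = 0) / (real (Suc d) * real (Suc n))
       \<le> measure_pmf.prob (mt_step d \<eta>) {\<eta>. \<eta> v = 1}"
proof -
  consider "\<eta> v = 0" | "\<eta> v = 1" | "\<eta> v \<noteq> 0" "\<eta> v \<noteq> 1"
    by blast
  then show ?thesis
  proof cases
    case 1
    let ?P = "spreader_pairs d \<eta>"
    have fin: "finite ?P"
      by (rule finite_spreader_pairs[OF adm])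
    have parent: "(v, tl v) \<in> ?P \<inter> contact \<eta> -` {\<eta>. \<eta> v = 1}"
      using adm 1 v by (auto simp: spreader_pairs_def nbrs_def contact_def admissible_def)
    then have "1 \<le> card (?P \<inter> contact \<eta> -` {\<eta>. \<eta> v = 1})"
      using fin by (metis One_nat_def Suc_leI card_gt_0_iff empty_iff finite_Int)
    moreover have "0 < card ?P"
      using fin parent by (auto simp: card_gt_0_iff)
    moreover have "real (card ?P) \<le> real (Suc d) * real (Suc n)"
      using card_spreader_pairs_le[OF adm, of d] by (metis of_nat_le_iff of_nat_mult)
    ultimately have "1 / (real (Suc d) * real (Suc n)) \<le> card (?P \<inter> contact \<eta> -` {\<eta>. \<eta> v = 1}) / card ?P"
      by (intro frac_le) simp_all
    then show ?thesis
      using 1 parent by (auto simp: mt_step_eq measure_pmf_of_set fin)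
  next
    case 2
    then show ?thesis
      using prob_mt_step_closed[of \<eta> "{\<eta>. \<eta> v = 1}"] contact_stifler by simp
  qed simp
qed

lemma mt_prob_stifler_Suc_ge:
  assumes "tvertex d v" and "v \<noteq> []"
  shows "mt_prob d n {\<eta>. \<eta> v = 1} + mt_prob d n {\<eta>. \<eta> v = 0} / (real (Suc d) * real (Suc n))
       \<le> mt_prob d (Suc n) {\<eta>. \<eta> v = 1}"
proof -
  have "mt_expectation d n (\<lambda>\<eta>. of_bool (\<eta> v = 1) + of_bool (\<eta> v = 0) / (real (Suc d) * real (Suc n)))
      \<le> mt_expectation d n (\<lambda>\<eta>. measure_pmf.prob (mt_step d \<eta>) {\<eta>. \<eta> v = 1})"
    by (rule mt_expectation_mono) (rule prob_mt_step_stifler_ge[OF _ assms])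
  also have "\<dots> = mt_expectation d (Suc n) (\<lambda>\<eta>. of_bool (\<eta> v = 1))"
    by (subst mt_expectation_Suc) (simp add: prob_Collect_eq_expectation)
  finally show ?thesis
    by (simp add: prob_Collect_eq_expectation)
qed

lemma mt_prob_informed_mono: "mt_prob d n {\<eta>. \<eta> v \<noteq> -1} \<le> mt_prob d (Suc n) {\<eta>. \<eta> v \<noteq> -1}"
  by (rule mt_prob_mono_closed) (simp add: contact_informed)

lemma mt_prob_stifler_mono: "mt_prob d n {\<eta>. \<eta> v = 1} \<le> mt_prob d (Suc n) {\<eta>. \<eta> v = 1}"
  by (rule mt_prob_mono_closed) (simp add: contact_stifler)

lemma mt_prob_spreader_tendsto_0:
  assumes "tvertex d v" and "v \<noteq> []"
  shows "(\<lambda>n. mt_prob d n {\<eta>. \<eta> v = 0}) \<longlonglongrightarrow> 0"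
proof -
  define I where "I n = mt_prob d n {\<eta>. \<eta> v \<noteq> -1}" for n
  define S where "S n = mt_prob d n {\<eta>. \<eta> v = 1}" for n
  define R where "R n = mt_prob d n {\<eta>. \<eta> v = 0}" for n
  have R: "R n = I n - S n" for n
    using mt_prob_informed_eq by (simp add: I_def S_def R_def)
  obtain LI where LI: "I \<longlonglongrightarrow> LI"
    using incseq_convergent[of I 1] mt_prob_informed_mono unfolding I_def
    by (metis incseq_SucI measure_pmf.prob_le_1)
  obtain LS where LS: "S \<longlonglongrightarrow> LS"
    using incseq_convergent[of S 1] mt_prob_stifler_mono unfolding S_def
    by (metis incseq_SucI measure_pmf.prob_le_1)
  have lim: "R \<longlonglongrightarrow> LI - LS"
    unfolding R by (intro tendsto_diff LI LS)
  have step: "S n + R n / (real (Suc d) * real (Suc n)) \<le> S (Suc n)" for n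
    using mt_prob_stifler_Suc_ge[OF assms] by (simp add: S_def R_def)
  have "(\<Sum>n<N. R n / (real (Suc d) * real (Suc n))) \<le> S N - S 0" for N
  proof (induction N)
    case (Suc N)
    then show ?case
      using step[of N] by (subst sum.lessThan_Suc) linarith
  qed simp
  moreover have "S N - S 0 \<le> 1" for N
    unfolding S_def by (smt (verit) measure_pmf.prob_le_1 measure_nonneg)
  ultimately have "summable (\<lambda>n. R n / (real (Suc d) * real (Suc n)))"
    by (intro summableI_nonneg_bounded[where x = 1]) (auto simp: R_def intro: order.trans)
  then have "summable (\<lambda>n. real (Suc d) * (R n / (real (Suc d) * real (Suc n))))"
    by (rule summable_mult)
  then have "summable (\<lambda>n. R n / real (Suc n))"
    by simp
  then have "LI - LS = 0"
    using limit_eq_0_if_summable_div_Suc[OF lim] by (simp add: R_def)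
  with lim have "R \<longlonglongrightarrow> 0"
    by simp
  then show ?thesis
    by (simp add: R_def[abs_def])
qed

lemma informed_children_contact_mono: "informed_children d v \<eta> \<le> informed_children d v (contact \<eta> p)"
  unfolding informed_children_def
  by (rule card_mono) (auto simp: finite_children contact_informed)

lemma mt_prob_tendsto_mt_q:
  "(\<lambda>n. mt_prob d n {\<eta>. \<eta> v \<noteq> -1 \<and> j \<le> informed_children d v \<eta>}) \<longlonglongrightarrow> mt_q d v j"
  unfolding mt_q_def informed_children_def[symmetric]
proof (rule LIMSEQ_incseq_SUP)
  show "bdd_above (range (\<lambda>n. mt_prob d n {\<eta>. \<eta> v \<noteq> -1 \<and> j \<le> informed_children d v \<eta>}))"
    by (rule bdd_aboveI[where M = 1]) auto
  show "incseq (\<lambda>n. mt_prob d n {\<eta>. \<eta> v \<noteq> -1 \<and> j \<le> informed_children d v \<eta>})"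
    by (rule incseq_SucI, rule mt_prob_mono_closed)
       (auto simp: contact_informed intro: order.trans[OF _ informed_children_contact_mono])
qed

lemma mt_q_eq_spread_prob:
  assumes "tvertex d v" and "v \<noteq> []"
  shows "mt_q d v j = spread_prob d j 0 * mt_q d v 0"
proof -
  have informed: "(\<lambda>n. mt_prob d n {\<eta>. \<eta> v \<noteq> -1}) \<longlonglongrightarrow> mt_q d v 0"
    using mt_prob_tendsto_mt_q[of d v 0] by simp
  have "(\<lambda>n. spread_prob d j 0 * mt_prob d n {\<eta>. \<eta> v \<noteq> -1} - mt_prob d n {\<eta>. \<eta> v = 0})
      \<longlonglongrightarrow> spread_prob d j 0 * mt_q d v 0"
    using tendsto_diff[OF tendsto_mult_left[OF informed] mt_prob_spreader_tendsto_0[OF assms]] by simp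
  then have "(\<lambda>n. mt_prob d n {\<eta>. \<eta> v \<noteq> -1 \<and> j \<le> informed_children d v \<eta>})
      \<longlonglongrightarrow> spread_prob d j 0 * mt_q d v 0"
    by (rule tendsto_sandwich[rotated 2, OF _ tendsto_mult_left[OF informed]])
       (use mt_prob_successors_le[OF assms] mt_prob_successors_ge[OF assms] in \<open>auto simp: algebra_simps\<close>)
  then show ?thesis
    using mt_prob_tendsto_mt_q LIMSEQ_unique by blast
qed

text \<open>The root and the first \<open>k\<close> vertices on the path from the root to \<open>v\<close> are spreaders, all other
  vertices ignorant: the configuration after \<open>k\<close> jumps when the rumour runs straight towards \<open>v\<close>.\<close>

definition path_config :: "vertex \<Rightarrow> nat \<Rightarrow> config" where
  "path_config v k = (\<lambda>u. if u \<in> (\<lambda>i. drop i v) ` {length v - k..} then 0 else -1)"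

lemma path_config_in_mt_state:
  assumes "tvertex d v" and "k \<le> length v"
  shows "path_config v k \<in> set_pmf (mt_state d k)"
  using assms(2)
proof (induction k)
  case 0
  have "(\<lambda>i. drop i v) ` {length v..} = {[]}"
    by auto
  then have "path_config v 0 = mt_init"
    by (auto simp: path_config_def mt_init_def)
  then show ?case
    by (simp add: mt_state_0)
next
  case (Suc k)
  define i where "i = length v - Suc k"
  have i: "i < length v" "Suc i = length v - k"
    using Suc.prems by (auto simp: i_def)
  let ?s = "drop (Suc i) v" and ?w = "drop i v"
  have prev: "path_config v k \<in> set_pmf (mt_state d k)"
    using Suc by simp
  have "?w \<notin> (\<lambda>i. drop i v) ` {length v - k..}"
    using i by (auto dest: arg_cong[of _ _ length])
  then have w: "path_config v k ?w = -1"
    by (simp add: path_config_def)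
  have "(?s, ?w) \<in> spreader_pairs d (path_config v k)"
    using i drop_in_children[OF assms(1) i(1)] tvertex_drop[OF assms(1)]
    by (auto simp: spreader_pairs_def path_config_def nbrs_def)
  moreover have "contact (path_config v k) (?s, ?w) = path_config v (Suc k)"
  proof -
    have "{length v - Suc k..} = insert i {Suc i..}"
      using i by (auto simp: i_def)
    then show ?thesis
      using w i by (auto simp: contact_def path_config_def fun_eq_iff)
  qed
  ultimately have "path_config v (Suc k) \<in> set_pmf (mt_step d (path_config v k))"
    using set_mt_step[OF admissible_mt_state[OF prev]] by force
  then show ?case
    using prev by (auto simp: mt_state_Suc)
qed

lemma mt_q_pos:
  assumes "tvertex d v"
  shows "0 < mt_q d v 0"
proof -
  have "v \<in> (\<lambda>i. drop i v) ` {length v - length v..}"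
    by (rule image_eqI[of _ _ 0]) simp_all
  then have "path_config v (length v) v = 0"
    by (simp add: path_config_def)
  then have "0 < mt_prob d (length v) {\<eta>. \<eta> v \<noteq> -1}"
    by (intro measure_pmf_posI[OF path_config_in_mt_state[OF assms]]) auto
  also have "\<dots> \<le> mt_q d v 0"
    unfolding mt_q_def by simp (rule cSUP_upper, auto intro: bdd_aboveI[where M = 1])
  finally show ?thesis .
qed

lemma spread_prob_Suc: "spread_prob d (Suc i) 0 = spread_prob d i 0 * (real (d - i) / real (Suc d))"
  by (simp add: spread_prob_def)

lemma spread_prob_closed_form:
  "i \<le> d \<Longrightarrow> spread_prob d i 0 = real (d choose i) * fact i / real (Suc d) ^ i"
proof (induction i)
  case (Suc i)
  then have "i \<le> d"
    by simp
  have absorb: "real (Suc i) * real (d choose Suc i) = real (d - i) * real (d choose i)"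
    using binomial_absorption[of i d] binomial_absorb_comp[of d i] by (metis of_nat_mult)
  have "spread_prob d (Suc i) 0 = real (d choose i) * fact i / real (Suc d) ^ i * (real (d - i) / real (Suc d))"
    using Suc.IH[OF \<open>i \<le> d\<close>] by (simp only: spread_prob_Suc)
  also have "\<dots> = fact i * (real (d - i) * real (d choose i)) / real (Suc d) ^ Suc i"
    by (simp only: power_Suc times_divide_times_eq mult_ac)
  also have "\<dots> = real (d choose Suc i) * fact (Suc i) / real (Suc d) ^ Suc i"
    unfolding absorb[symmetric] by (simp only: fact_Suc of_nat_mult mult_ac)
  finally show ?case .
qed (simp add: spread_prob_def)

lemma spread_prob_diff:
  assumes "i \<le> d"
  shows "spread_prob d i 0 - spread_prob d (Suc i) 0 = real (d choose i) * fact (i + 1) / real (d + 1) ^ (i + 1)"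
proof -
  have "spread_prob d i 0 - spread_prob d (Suc i) 0 = spread_prob d i 0 * (real (Suc i) / real (Suc d))"
    using assms by (simp add: spread_prob_Suc field_simps of_nat_diff)
  also have "\<dots> = real (d choose i) * (real (Suc i) * fact i) / (real (Suc d) * real (Suc d) ^ i)"
    by (simp only: spread_prob_closed_form[OF assms] times_divide_times_eq mult_ac)
  finally show ?thesis
    by simp
qed

lemma sum_index_mult_diff:
  fixes f :: "nat \<Rightarrow> real"
  shows "(\<Sum>i\<in>{0..m}. real i * (f i - f (Suc i))) = (\<Sum>i\<in>{1..m}. f i) - real m * f (Suc m)"
  by (induction m) (simp_all add: algebra_simps)

lemma one_less_sum_spread_prob:
  assumes "3 \<le> d"
  shows "1 < (\<Sum>i\<in>{1..d}. spread_prob d i 0)"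
proof -
  have T1: "spread_prob d 1 0 = real d / (real d + 1)"
    by (simp add: spread_prob_def)
  have T2: "spread_prob d 2 0 = spread_prob d 1 0 * ((real d - 1) / (real d + 1))"
    using assms spread_prob_Suc[of d 1] by (simp add: of_nat_diff numeral_2_eq_2 add.commute)
  have T1_ge: "3 / 4 \<le> spread_prob d 1 0"
    unfolding T1 using assms by (simp add: field_simps)
  have half: "1 / 2 \<le> (real d - 1) / (real d + 1)"
    using assms by (simp add: field_simps)
  have "3 / 4 * (1 / 2) \<le> spread_prob d 2 0"
    unfolding T2 by (rule mult_mono[OF T1_ge half]) (simp_all add: spread_prob_nonneg)
  with T1_ge have "1 < spread_prob d 1 0 + spread_prob d 2 0"
    by linarith
  also have "\<dots> \<le> (\<Sum>i\<in>{1..d}. spread_prob d i 0)"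
    using sum_mono2[of "{1..d}" "{1, 2}" "\<lambda>i. spread_prob d i 0"] assms by (simp add: spread_prob_nonneg)
  finally show ?thesis .
qed

lemma mt_X_dist_eq:
  assumes "tvertex d v" and "v \<noteq> []"
  shows "mt_X_dist d v i = spread_prob d i 0 - spread_prob d (Suc i) 0"
proof -
  have "mt_q d v 0 \<noteq> 0"
    using mt_q_pos[OF assms(1)] by simp
  then show ?thesis
    unfolding mt_X_dist_def mt_q_eq_spread_prob[OF assms, of i] mt_q_eq_spread_prob[OF assms, of "Suc i"]
    by (simp add: left_diff_distrib[symmetric])
qed

lemma mt_X_mean_eq:
  assumes "tvertex d v" and "v \<noteq> []"
  shows "mt_X_mean d v = (\<Sum>i\<in>{1..d}. spread_prob d i 0)"
  unfolding mt_X_mean_def mt_X_dist_eq[OF assms] sum_index_mult_diff[of "\<lambda>i. spread_prob d i 0"]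
  by (simp add: spread_prob_Suc)

theorem lemma2:
  fixes d :: nat and v :: vertex
  assumes "d \<ge> 2" and "tvertex d v" and "v \<noteq> []"
  shows "(\<forall>i\<le>d. mt_X_dist d v i = real (d choose i) * fact (i + 1) / real (d + 1) ^ (i + 1))
         \<and> (mt_X_mean d v > 1 \<longleftrightarrow> d \<ge> 3)
         \<and> (d = 2 \<longrightarrow> mt_X_mean d v = 8 / 9)"
proof -
  have dist: "\<forall>i\<le>d. mt_X_dist d v i = real (d choose i) * fact (i + 1) / real (d + 1) ^ (i + 1)"
    using mt_X_dist_eq[OF assms(2,3)] spread_prob_diff by simp
  have two: "mt_X_mean d v = 8 / 9" if "d = 2"
  proof -
    have "{1..2::nat} = {1, 2}"
      by auto
    then have "mt_X_mean d v = spread_prob 2 1 0 + spread_prob 2 2 0"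
      using mt_X_mean_eq[OF assms(2,3)] that by simp
    also have "\<dots> = 8 / 9"
      by (simp add: spread_prob_Suc spread_prob_ge numeral_2_eq_2)
    finally show ?thesis .
  qed
  have "mt_X_mean d v > 1 \<longleftrightarrow> d \<ge> 3"
    using assms(1) two one_less_sum_spread_prob mt_X_mean_eq[OF assms(2,3)]
    by (cases "d = 2") auto
  with dist two show ?thesis
    by blast
qed

end
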